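(* If $n=p^s$ with $p$ prime and $s\ge 1$ an integer, then the $n\times n$ square has no perfect Mondrian partition.
   Context: A Mondrian partition of an $n\times n$ square ($n$ a positive integer) is a dissection of the square into $k\ge 2$ non-overlapping rectangles with positive integer side lengths which are pairwise non-congruent (rectangles of dimensions $a\times b$ and $b\times a$ count as congruent). It is perfect if all its rectangles have the same area. *)

theory Defs
  imports Main "HOL-Computational_Algebra.Primes"
begin

text \<open>An axis-parallel rectangle with integer corners inside the n x n square,
  given as (x, y, w, h): lower-left corner (x,y), width w, height h.
  Since all corners are integers, a rectangle is determined by the set of unit
  cells it covers; cell (i,j) stands for the unit square [i,i+1] x [j,j+1].\<close>

type_synonym rect = "nat \<times> nat \<times> nat \<times> nat"

fun rwidth :: "rect \<Rightarrow> nat" where "rwidth (x, y, w, h) = w"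
fun rheight :: "rect \<Rightarrow> nat" where "rheight (x, y, w, h) = h"

fun cells :: "rect \<Rightarrow> (nat \<times> nat) set" where
  "cells (x, y, w, h) = {x..<x+w} \<times> {y..<y+h}"

fun rarea :: "rect \<Rightarrow> nat" where "rarea (x, y, w, h) = w * h"

definition congruent_rect :: "rect \<Rightarrow> rect \<Rightarrow> bool" where
  "congruent_rect r s \<longleftrightarrow>
     (rwidth r = rwidth s \<and> rheight r = rheight s) \<or>
     (rwidth r = rheight s \<and> rheight r = rwidth s)"

text \<open>A dissection of the n x n square into the rectangles of the list rs:
  positive integer sides, non-overlapping (disjoint interiors, i.e. disjoint
  cell sets), and covering the whole square.\<close>
definition dissection :: "nat \<Rightarrow> rect list \<Rightarrow> bool" where
  "dissection n rs \<longleftrightarrow>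
     (\<forall>r\<in>set rs. rwidth r > 0 \<and> rheight r > 0) \<and>
     (\<forall>i<length rs. \<forall>j<length rs. i \<noteq> j \<longrightarrow> cells (rs!i) \<inter> cells (rs!j) = {}) \<and>
     (\<Union>r\<in>set rs. cells r) = {0..<n} \<times> {0..<n}"

definition mondrian_partition :: "nat \<Rightarrow> rect list \<Rightarrow> bool" where
  "mondrian_partition n rs \<longleftrightarrow>
     length rs \<ge> 2 \<and> dissection n rs \<and>
     (\<forall>i<length rs. \<forall>j<length rs. i \<noteq> j \<longrightarrow> \<not> congruent_rect (rs!i) (rs!j))"

definition perfect_mondrian_partition :: "nat \<Rightarrow> rect list \<Rightarrow> bool" where
  "perfect_mondrian_partition n rs \<longleftrightarrow>
     mondrian_partition n rs \<and> (\<forall>r\<in>set rs. \<forall>s\<in>set rs. rarea r = rarea s)"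

end

theory Submission
  imports Defs
begin

text \<open>Suppose the \<open>p\<^sup>s \<times> p\<^sup>s\<close> square is split into \<open>k \<ge> 2\<close> pairwise non-congruent
  rectangles of common area \<open>A\<close>. Then \<open>k A = p\<^sup>2\<^sup>s\<close>, so \<open>A = p\<^sup>t\<close> and \<open>k = p\<^sup>2\<^sup>s\<^sup>-\<^sup>t\<close>
  with \<open>t < 2s\<close>. Every rectangle is \<open>p\<^sup>i \<times> p\<^sup>t\<^sup>-\<^sup>i\<close> with both sides at most \<open>p\<^sup>s\<close>, so its
  shorter side is \<open>p\<^sup>j\<close> with \<open>t - s \<le> j \<le> t/2\<close>. Equal-area rectangles with the same shorter
  side are congruent, hence \<open>k\<close> is at most the number of such \<open>j\<close>, which is at most
  \<open>2s - t < 2\<^sup>2\<^sup>s\<^sup>-\<^sup>t \<le> k\<close>.\<close>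

lemma pairwise_set_if_pairwise_nth:
  assumes "\<forall>i<length xs. \<forall>j<length xs. i \<noteq> j \<longrightarrow> P (xs ! i) (xs ! j)"
  shows "pairwise P (set xs)"
proof (rule pairwiseI)
  fix x y assume "x \<in> set xs" "y \<in> set xs" "x \<noteq> y"
  then obtain i j where "i < length xs" "xs ! i = x" "j < length xs" "xs ! j = y"
    by (auto simp: in_set_conv_nth)
  with \<open>x \<noteq> y\<close> assms show "P x y" by blast
qed

lemma card_cells: "card (cells r) = rarea r"
  by (cases r) (simp add: card_cartesian_product)

lemma finite_cells: "finite (cells r)"
  by (cases r) simp

lemma dissection_distinct:
  assumes "dissection n rs"
  shows "distinct rs"
  unfolding distinct_conv_nth
proof (intro allI impI)
  fix i j assume ij: "i < length rs" "j < length rs" "i \<noteq> j"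
  obtain x y w h where r: "rs ! i = (x, y, w, h)" by (cases "rs ! i")
  have "w > 0" "h > 0" using assms ij r nth_mem unfolding dissection_def by fastforce+
  then have "(x, y) \<in> cells (rs ! i)" using r by simp
  moreover have "cells (rs ! i) \<inter> cells (rs ! j) = {}"
    using assms ij unfolding dissection_def by blast
  ultimately show "rs ! i \<noteq> rs ! j" by auto
qed

lemma dissection_sum_rarea:
  assumes "dissection n rs"
  shows "(\<Sum>r\<in>set rs. rarea r) = n * n"
proof -
  have "pairwise (\<lambda>r q. cells r \<inter> cells q = {}) (set rs)"
    using assms unfolding dissection_def by (intro pairwise_set_if_pairwise_nth) blast
  then have "card (\<Union>r\<in>set rs. cells r) = (\<Sum>r\<in>set rs. card (cells r))"
    by (intro card_UN_disjoint) (auto simp: finite_cells dest: pairwiseD)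
  also have "(\<Union>r\<in>set rs. cells r) = {0..<n} \<times> {0..<n}"
    using assms unfolding dissection_def by blast
  finally show ?thesis by (simp add: card_cells card_cartesian_product)
qed

lemma dissection_side_le:
  assumes "dissection n rs" "r \<in> set rs"
  shows "rwidth r \<le> n" "rheight r \<le> n"
proof -
  obtain x y w h where r: "r = (x, y, w, h)" by (cases r)
  have "w > 0" "h > 0" using assms r unfolding dissection_def by auto
  then have "(x + w - 1, y + h - 1) \<in> cells r" using r by auto
  moreover have "cells r \<subseteq> {0..<n} \<times> {0..<n}" using assms unfolding dissection_def by blast
  ultimately have "x + w - 1 < n" "y + h - 1 < n" by auto
  then show "rwidth r \<le> n" "rheight r \<le> n" using r \<open>w > 0\<close> \<open>h > 0\<close> by auto
qed

definition short_side :: "rect \<Rightarrow> nat" where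
  "short_side r = min (rwidth r) (rheight r)"

lemma congruent_rect_if_eq_rarea_short_side:
  assumes "rarea r = rarea q" "short_side r = short_side q" "short_side r > 0"
  shows "congruent_rect r q"
proof -
  obtain x y w h where r: "r = (x, y, w, h)" by (cases r)
  obtain x' y' w' h' where q: "q = (x', y', w', h')" by (cases q)
  have area: "w * h = w' * h'" and short: "min w h = min w' h'" and pos: "min w h > 0"
    using assms r q by (simp_all add: short_side_def)
  have "(w = w' \<and> h = h') \<or> (w = h' \<and> h = w')"
  proof (cases "w \<le> h"; cases "w' \<le> h'")
    assume "w \<le> h" "w' \<le> h'"
    then show ?thesis using area short pos by auto
  next
    assume "w \<le> h" "\<not> w' \<le> h'"
    then show ?thesis using area short pos by (auto simp: mult.commute)
  next
    assume "\<not> w \<le> h" "w' \<le> h'"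
    then show ?thesis using area short pos by (auto simp: mult.commute)
  next
    assume "\<not> w \<le> h" "\<not> w' \<le> h'"
    then show ?thesis using area short pos by auto
  qed
  then show ?thesis using r q by (auto simp: congruent_rect_def)
qed

lemma perfect_mondrian_partition_inj_on_short_side:
  assumes "perfect_mondrian_partition n rs"
  shows "inj_on short_side (set rs)"
proof (rule inj_onI, rule ccontr)
  fix r q assume rq: "r \<in> set rs" "q \<in> set rs" "short_side r = short_side q" "r \<noteq> q"
  have "pairwise (\<lambda>r q. \<not> congruent_rect r q) (set rs)"
    using assms unfolding perfect_mondrian_partition_def mondrian_partition_def
    by (intro pairwise_set_if_pairwise_nth) blast
  then have "\<not> congruent_rect r q" using rq by (auto dest: pairwiseD)
  moreover have "rarea r = rarea q"
    using assms rq(1,2) unfolding perfect_mondrian_partition_def by blast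
  moreover have "short_side r > 0"
    using assms rq(1) unfolding perfect_mondrian_partition_def mondrian_partition_def
      dissection_def short_side_def by simp
  ultimately show False using congruent_rect_if_eq_rarea_short_side rq(3) by blast
qed

lemma perfect_mondrian_partition_length_mult_rarea:
  assumes "perfect_mondrian_partition n rs" "r \<in> set rs"
  shows "length rs * rarea r = n * n"
proof -
  have D: "dissection n rs"
    using assms unfolding perfect_mondrian_partition_def mondrian_partition_def by blast
  have "\<forall>q\<in>set rs. rarea q = rarea r"
    using assms unfolding perfect_mondrian_partition_def by blast
  then have "(\<Sum>q\<in>set rs. rarea q) = card (set rs) * rarea r" by simp
  then show ?thesis
    using dissection_sum_rarea[OF D] distinct_card[OF dissection_distinct[OF D]] by simp
qed

lemma mult_eq_prime_powerE:
  fixes p a b :: nat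
  assumes "prime p" "a * b = p ^ m"
  obtains i where "i \<le> m" "a = p ^ i" "b = p ^ (m - i)"
proof -
  have p1: "p > 1" using assms(1) prime_gt_1_nat by blast
  obtain i where i: "i \<le> m" "a = p ^ i"
    using divides_primepow_nat[OF assms(1), of a m] assms(2) by (metis dvd_triv_left)
  have "p ^ i * b = p ^ i * p ^ (m - i)" using assms(2) i by (simp flip: power_add)
  then have "b = p ^ (m - i)" using p1 by simp
  with i that show ?thesis by blast
qed

lemma min_factor_of_prime_power:
  fixes p w h :: nat
  assumes "prime p" "w * h = p ^ t" "w \<le> p ^ s" "h \<le> p ^ s"
  shows "min w h \<in> power p ` {t - s..t div 2}"
proof -
  have p1: "p > 1" using assms(1) prime_gt_1_nat by blast
  obtain i where i: "i \<le> t" "w = p ^ i" "h = p ^ (t - i)"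
    using mult_eq_prime_powerE[OF assms(1,2)] .
  have "i \<le> s" "t - i \<le> s"
    using assms(3,4) i power_le_imp_le_exp[OF p1] by auto
  moreover have "min w h = p ^ min i (t - i)"
    using i p1 by (simp add: min_def power_increasing_iff)
  ultimately show ?thesis by (intro image_eqI[of _ _ "min i (t - i)"]) auto
qed

lemma perfect_mondrian_partition_short_side_range:
  assumes "prime p" "perfect_mondrian_partition (p ^ s) rs" "r0 \<in> set rs" "rarea r0 = p ^ t"
  shows "short_side ` set rs \<subseteq> power p ` {t - s..t div 2}"
proof
  fix z assume "z \<in> short_side ` set rs"
  then obtain r where r: "r \<in> set rs" "z = short_side r" by blast
  have "rarea r = p ^ t"
    using assms(2-4) r(1) unfolding perfect_mondrian_partition_def by metis
  moreover have "dissection (p ^ s) rs"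
    using assms(2) unfolding perfect_mondrian_partition_def mondrian_partition_def by blast
  ultimately show "z \<in> power p ` {t - s..t div 2}"
    using min_factor_of_prime_power[OF assms(1)] dissection_side_le[of "p ^ s" rs r] r
    by (cases r) (simp add: short_side_def)
qed

lemma card_power_window_less:
  fixes p :: nat
  assumes "p > 1" "t < 2 * s"
  shows "card (power p ` {t - s..t div 2}) < p ^ (2 * s - t)"
proof -
  have "card (power p ` {t - s..t div 2}) \<le> card {t - s..t div 2}" by (rule card_image_le) simp
  also have "\<dots> \<le> 2 * s - t" using assms(2) by simp
  also have "\<dots> < 2 ^ (2 * s - t)" by (rule less_exp)
  also have "\<dots> \<le> p ^ (2 * s - t)" using assms(1) by (simp add: power_mono)
  finally show ?thesis .
qed

theorem mainTheorem7:
  fixes p s n :: nat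
  assumes "prime p" and "s \<ge> 1" and "n = p ^ s"
  shows "\<not> (\<exists>rs. perfect_mondrian_partition n rs)"
proof
  assume "\<exists>rs. perfect_mondrian_partition n rs"
  then obtain rs where P: "perfect_mondrian_partition (p ^ s) rs" using assms(3) by blast
  have D: "dissection (p ^ s) rs" and len: "length rs \<ge> 2"
    using P unfolding perfect_mondrian_partition_def mondrian_partition_def by blast+
  obtain r0 where r0: "r0 \<in> set rs" using len by (cases rs) auto
  have "rarea r0 * length rs = p ^ (2 * s)"
    using perfect_mondrian_partition_length_mult_rarea[OF P r0]
    by (simp add: mult_2 flip: power_add) (simp add: mult.commute)
  then obtain t where t: "t \<le> 2 * s" "rarea r0 = p ^ t" and k: "length rs = p ^ (2 * s - t)"
    by (rule mult_eq_prime_powerE[OF assms(1)])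
  with len have "t < 2 * s" by (cases "t = 2 * s") auto
  have "length rs = card (short_side ` set rs)"
    using card_image[OF perfect_mondrian_partition_inj_on_short_side[OF P]]
      distinct_card[OF dissection_distinct[OF D]] by simp
  also have "\<dots> \<le> card (power p ` {t - s..t div 2})"
    using perfect_mondrian_partition_short_side_range[OF assms(1) P r0 t(2)] by (intro card_mono) auto
  also have "\<dots> < length rs"
    using card_power_window_less[OF prime_gt_1_nat[OF assms(1)] \<open>t < 2 * s\<close>] k by simp
  finally show False by simp
qed

end
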